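(* Let $\mathcal D\subseteq\mathcal C$ be a $\le$-amalgamation class. Let $A\in\mathcal D$ and let $U$ be a finite independent subset of $A$. Let $M$ be the maximal number of common predecessors in $A$ of a $q$-element subset of $U$, and let $N\ge M$ be such that $\mathcal T_N\in\mathcal D$. Then there is $B\in\mathcal D$ with $A\le B$ such that every $q$-element subset of $U$ has at least $N$ common predecessors in $B$.
   Context: Fix an integer $q\ge2$; $T=T_q$ is the digraph whose vertices are finite sequences over $\{0,\ldots,q-1\}$ with edges $(\bar w,\bar wi)$. Subdigraphs are induced. For a digraph, an $s$-arc ($s\ge0$) from $u_0$ to $u_s$ is a sequence $u_0\ldots u_s$ with each $(u_i,u_{i+1})$ an edge and $u_{i-1}\ne u_{i+1}$ for $0<i<s$; ${\rm desc}^s(u)$ is the set of endpoints of $s$-arcs from $u$, ${\rm desc}(u)=\bigcup_{s\ge0}{\rm desc}^s(u)$, ${\rm desc}(Y)=\bigcup_{y\in Y}{\rm desc}(y)$. $A\le B$ means $A$ is a subdigraph of $B$ with ${\rm desc}_B(a)\subseteq A$ for all $a\in A$ (descendant-closed); a descendant-closed set is finitely generated if it is ${\rm desc}(Z)$ for finite $Z$. A $\le$-embedding is an embedding $f:A\to B$ with $f(A)\le B$; $\le$-embeddings $f_i:A\to B_i$ are isomorphic if $f_2=h\circ f_1$ for an isomorphism $h:B_1\to B_2$. A subset is independent if descendant sets of distinct members are disjoint. A common predecessor of a set $X$ is a vertex $a$ with $(a,x)$ an edge for all $x\in X$. $\mathcal C$ is the class of digraphs $A$ with ${\rm desc}(a)\cong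 T$ for all $a\in A$, $A$ finitely generated, and ${\rm desc}(a)\cap{\rm desc}(b)$ finitely generated for all $a,b\in A$. For $n\ge1$, $\mathcal T_n$ is the member of $\mathcal C$ generated by $n$ vertices $x_1,\ldots,x_n$ with ${\rm desc}^1(x_i)={\rm desc}^1(x_j)$ for all $i,j$ ($\mathcal T_1=T$). A $\le$-amalgamation class is a class $\mathcal D$ of digraphs which (1) consists of countable finitely generated digraphs, is closed under isomorphism and has countably many isomorphism types; (2) is closed under finitely generated descendant-closed subdigraphs; (3) has the $\le$-amalgamation property: for $A,B_1,B_2\in\mathcal D$ and $\le$-embeddings $f_i:A\to B_i$ there are $C\in\mathcal D$ and $\le$-embeddings $g_i:B_i\to C$ with $g_1\circ f_1=g_2\circ f_2$; (4) for all $A,B\in\mathcal D$ has only countably many isomorphism types of $\le$-embeddings $A\to B$. *)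

theory Defs
  imports Main "HOL-Library.Countable_Set"
begin

type_synonym 'a digraph = "'a set \<times> ('a \<times> 'a) set"

definition verts :: "'a digraph \<Rightarrow> 'a set" where "verts G = fst G"
definition edges :: "'a digraph \<Rightarrow> ('a \<times> 'a) set" where "edges G = snd G"

definition wf_digraph :: "'a digraph \<Rightarrow> bool" where
  "wf_digraph G \<longleftrightarrow> edges G \<subseteq> verts G \<times> verts G"

definition induced :: "'a digraph \<Rightarrow> 'a set \<Rightarrow> 'a digraph" where
  "induced G X = (X, edges G \<inter> (X \<times> X))"

definition iso_map :: "'a digraph \<Rightarrow> 'b digraph \<Rightarrow> ('a \<Rightarrow> 'b) \<Rightarrow> bool" where
  "iso_map G H h \<longleftrightarrow> bij_betw h (verts G) (verts H) \<and>
     (\<forall>x\<in>verts G. \<forall>y\<in>verts G. (x, y) \<in> edges G \<longleftrightarrow> (h x, h y) \<in> edges H)"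

definition isomorphic :: "'a digraph \<Rightarrow> 'b digraph \<Rightarrow> bool" where
  "isomorphic G H \<longleftrightarrow> (\<exists>h. iso_map G H h)"

text \<open>An s-arc u_0 ... u_s is a list of length s+1.\<close>
definition is_arc :: "'a digraph \<Rightarrow> 'a list \<Rightarrow> bool" where
  "is_arc G xs \<longleftrightarrow> xs \<noteq> [] \<and> set xs \<subseteq> verts G \<and>
     (\<forall>i. i + 1 < length xs \<longrightarrow> (xs ! i, xs ! (i + 1)) \<in> edges G) \<and>
     (\<forall>i. 0 < i \<and> i + 1 < length xs \<longrightarrow> xs ! (i - 1) \<noteq> xs ! (i + 1))"

definition desc_n :: "'a digraph \<Rightarrow> nat \<Rightarrow> 'a \<Rightarrow> 'a set" where
  "desc_n G s u = {last xs | xs. is_arc G xs \<and> hd xs = u \<and> length xs = Suc s}"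

definition desc :: "'a digraph \<Rightarrow> 'a \<Rightarrow> 'a set" where
  "desc G u = (\<Union>s. desc_n G s u)"

definition desc_set :: "'a digraph \<Rightarrow> 'a set \<Rightarrow> 'a set" where
  "desc_set G Y = (\<Union>y\<in>Y. desc G y)"

definition desc_closed :: "'a digraph \<Rightarrow> 'a set \<Rightarrow> bool" where
  "desc_closed G X \<longleftrightarrow> X \<subseteq> verts G \<and> (\<forall>x\<in>X. desc G x \<subseteq> X)"

definition le_sub :: "'a digraph \<Rightarrow> 'a digraph \<Rightarrow> bool" where
  "le_sub A B \<longleftrightarrow> verts A \<subseteq> verts B \<and> edges A = edges B \<inter> (verts A \<times> verts A) \<and>
     (\<forall>a\<in>verts A. desc B a \<subseteq> verts A)"

definition fin_generated :: "'a digraph \<Rightarrow> bool" where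
  "fin_generated G \<longleftrightarrow> (\<exists>Z. finite Z \<and> Z \<subseteq> verts G \<and> desc_set G Z = verts G)"

definition embedding :: "'a digraph \<Rightarrow> 'b digraph \<Rightarrow> ('a \<Rightarrow> 'b) \<Rightarrow> bool" where
  "embedding A B f \<longleftrightarrow> inj_on f (verts A) \<and> f ` verts A \<subseteq> verts B \<and>
     (\<forall>x\<in>verts A. \<forall>y\<in>verts A. (x, y) \<in> edges A \<longleftrightarrow> (f x, f y) \<in> edges B)"

definition le_embedding :: "'a digraph \<Rightarrow> 'b digraph \<Rightarrow> ('a \<Rightarrow> 'b) \<Rightarrow> bool" where
  "le_embedding A B f \<longleftrightarrow> embedding A B f \<and> desc_closed B (f ` verts A)"

definition emb_isomorphic :: "'a digraph \<Rightarrow> 'b digraph \<Rightarrow> ('a \<Rightarrow> 'b) \<Rightarrow> ('a \<Rightarrow> 'b) \<Rightarrow> bool" where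
  "emb_isomorphic A B f g \<longleftrightarrow> (\<exists>h. iso_map B B h \<and> (\<forall>x\<in>verts A. g x = h (f x)))"

definition T_q :: "nat \<Rightarrow> nat list digraph" where
  "T_q q = ({w. set w \<subseteq> {..<q}}, {(w, w @ [i]) | w i. set w \<subseteq> {..<q} \<and> i < q})"

definition in_C :: "nat \<Rightarrow> 'a digraph \<Rightarrow> bool" where
  "in_C q G \<longleftrightarrow> wf_digraph G \<and>
     (\<forall>a\<in>verts G. isomorphic (induced G (desc G a)) (T_q q)) \<and>
     fin_generated G \<and>
     (\<forall>a\<in>verts G. \<forall>b\<in>verts G. \<exists>Z. finite Z \<and> Z \<subseteq> verts G \<and>
         desc G a \<inter> desc G b = desc_set G Z)"

definition is_T_n :: "nat \<Rightarrow> nat \<Rightarrow> 'a digraph \<Rightarrow> bool" where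
  "is_T_n q n G \<longleftrightarrow> n \<ge> 1 \<and> in_C q G \<and>
     (\<exists>xs. length xs = n \<and> distinct xs \<and> set xs \<subseteq> verts G \<and>
        desc_set G (set xs) = verts G \<and>
        (\<forall>i<n. \<forall>j<n. desc_n G 1 (xs ! i) = desc_n G 1 (xs ! j)))"

text \<open>All digraphs in the class are countable, so we take them on vertex type nat.\<close>
definition le_amalgamation_class :: "nat digraph set \<Rightarrow> bool" where
  "le_amalgamation_class D \<longleftrightarrow>
     \<comment> \<open>(1)\<close>
     (\<forall>G\<in>D. wf_digraph G \<and> fin_generated G) \<and>
     (\<forall>G\<in>D. \<forall>H :: nat digraph. wf_digraph H \<and> isomorphic G H \<longrightarrow> H \<in> D) \<and>
     (\<exists>S. countable S \<and> S \<subseteq> D \<and> (\<forall>G\<in>D. \<exists>H\<in>S. isomorphic G H)) \<and>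
     \<comment> \<open>(2)\<close>
     (\<forall>G\<in>D. \<forall>Z. finite Z \<and> Z \<subseteq> verts G \<longrightarrow> induced G (desc_set G Z) \<in> D) \<and>
     \<comment> \<open>(3)\<close>
     (\<forall>A\<in>D. \<forall>B1\<in>D. \<forall>B2\<in>D. \<forall>f1 f2.
        le_embedding A B1 f1 \<and> le_embedding A B2 f2 \<longrightarrow>
        (\<exists>C\<in>D. \<exists>g1 g2. le_embedding B1 C g1 \<and> le_embedding B2 C g2 \<and>
            (\<forall>x\<in>verts A. g1 (f1 x) = g2 (f2 x)))) \<and>
     \<comment> \<open>(4)\<close>
     (\<forall>A\<in>D. \<forall>B\<in>D. \<exists>F. countable F \<and> (\<forall>g\<in>F. le_embedding A B g) \<and>
        (\<forall>f. le_embedding A B f \<longrightarrow> (\<exists>g\<in>F. emb_isomorphic A B f g)))"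

definition independent :: "'a digraph \<Rightarrow> 'a set \<Rightarrow> bool" where
  "independent G U \<longleftrightarrow> U \<subseteq> verts G \<and>
     (\<forall>u\<in>U. \<forall>v\<in>U. u \<noteq> v \<longrightarrow> desc G u \<inter> desc G v = {})"

definition common_preds :: "'a digraph \<Rightarrow> 'a set \<Rightarrow> 'a set" where
  "common_preds G X = {a \<in> verts G. \<forall>x\<in>X. (a, x) \<in> edges G}"

end

theory Submission
  imports Defs
begin

text \<open>Every \<open>q\<close>-element subset \<open>S\<close> of \<open>U\<close> is independent, so the descendant sets of its
  members are disjoint copies of \<open>T\<close>; the same holds for the \<open>q\<close> children shared by the
  generators of \<open>\<T>\<^sub>N\<close>. Gluing isomorphisms between these trees gives \<open>\<le>\<close>-embeddings
  of one descendant-closed digraph into the current extension of \<open>A\<close> and into \<open>\<T>\<^sub>N\<close>, and amalgamating along them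
  turns the \<open>N\<close> generators into common predecessors of the image of \<open>S\<close>. Since
  \<open>\<le>\<close>-embeddings preserve independence and common predecessors, this can be repeated
  for the finitely many \<open>q\<close>-subsets of \<open>U\<close> one after the other.\<close>

abbreviation inner_edges :: "'a digraph \<Rightarrow> ('a \<times> 'a) set" where
  "inner_edges G \<equiv> edges G \<inter> verts G \<times> verts G"

lemma is_arc_take: "is_arc G xs \<Longrightarrow> 0 < n \<Longrightarrow> is_arc G (take n xs)"
  unfolding is_arc_def by (auto dest: in_set_takeD)

lemma is_arc_snoc:
  assumes "is_arc G xs" "(last xs, z) \<in> inner_edges G"
    and "\<not> (2 \<le> length xs \<and> xs ! (length xs - 2) = z)"
  shows "is_arc G (xs @ [z])"
proof -
  have ne: "xs \<noteq> []" using assms(1) by (simp add: is_arc_def)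
  then have last: "last xs = xs ! (length xs - 1)" by (simp add: last_conv_nth)
  show ?thesis unfolding is_arc_def
  proof (intro conjI allI impI)
    show "xs @ [z] \<noteq> []" by simp
    show "set (xs @ [z]) \<subseteq> verts G" using assms(1,2) by (auto simp: is_arc_def)
  next
    fix i assume "i + 1 < length (xs @ [z])"
    then consider "i + 1 < length xs" | "i = length xs - 1" by fastforce
    then show "((xs @ [z]) ! i, (xs @ [z]) ! (i + 1)) \<in> edges G"
      by cases (use assms ne last in \<open>auto simp: nth_append is_arc_def\<close>)
  next
    fix i assume i: "0 < i \<and> i + 1 < length (xs @ [z])"
    then consider "i + 1 < length xs" | "i = length xs - 1" by fastforce
    then show "(xs @ [z]) ! (i - 1) \<noteq> (xs @ [z]) ! (i + 1)"
    proof cases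
      case 1
      then show ?thesis using assms(1) i by (auto simp: nth_append is_arc_def)
    next
      case 2
      moreover have "length xs - 1 - 1 = length xs - 2" by simp
      ultimately show ?thesis using assms(3) i ne by (auto simp: nth_append)
    qed
  qed
qed

lemma is_arc_reaches:
  assumes "is_arc G xs" "i < length xs"
  shows "(hd xs, xs ! i) \<in> (inner_edges G)\<^sup>*"
  using assms(2)
proof (induction i)
  case 0
  with assms(1) show ?case by (simp add: hd_conv_nth is_arc_def)
next
  case (Suc i)
  with assms(1) have "(xs ! i, xs ! Suc i) \<in> inner_edges G"
    unfolding is_arc_def by (auto dest: nth_mem)
  with Suc show ?case by (meson Suc_lessD rtrancl_into_rtrancl)
qed

lemma is_arc_in_desc: "is_arc G xs \<Longrightarrow> v \<in> set xs \<Longrightarrow> v \<in> desc G (hd xs)"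
proof -
  assume arc: "is_arc G xs" and "v \<in> set xs"
  then obtain i where i: "i < length xs" "xs ! i = v" by (auto simp: in_set_conv_nth)
  have "is_arc G (take (Suc i) xs)" using is_arc_take[OF arc] by simp
  moreover have "hd (take (Suc i) xs) = hd xs" using i by (cases xs) auto
  moreover have "last (take (Suc i) xs) = v" using i by (simp add: take_Suc_conv_app_nth)
  ultimately show ?thesis unfolding desc_def desc_n_def using i(1) by force
qed

text \<open>Arcs may not backtrack, but a walk that backtracks can be shortened, so descendants
  are just the vertices reachable along edges.\<close>
lemma desc_iff: "y \<in> desc G x \<longleftrightarrow> x \<in> verts G \<and> (x, y) \<in> (inner_edges G)\<^sup>*"
proof
  assume "y \<in> desc G x"
  then obtain xs where xs: "is_arc G xs" "hd xs = x" "last xs = y"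
    unfolding desc_def desc_n_def by auto
  then have "xs \<noteq> []" "x \<in> verts G" by (auto simp: is_arc_def)
  with is_arc_reaches[OF xs(1), of "length xs - 1"] xs show "x \<in> verts G \<and> (x, y) \<in> (inner_edges G)\<^sup>*"
    by (simp add: last_conv_nth)
next
  assume "x \<in> verts G \<and> (x, y) \<in> (inner_edges G)\<^sup>*"
  then have x: "x \<in> verts G" and reach: "(x, y) \<in> (inner_edges G)\<^sup>*" by auto
  from reach show "y \<in> desc G x"
  proof (induction rule: rtrancl_induct)
    case base
    have "is_arc G [x]" using x by (simp add: is_arc_def)
    then show ?case unfolding desc_def desc_n_def by force
  next
    case (step y z)
    then obtain xs where xs: "is_arc G xs" "hd xs = x" "last xs = y"
      unfolding desc_def desc_n_def by auto
    show ?case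
    proof (cases "2 \<le> length xs \<and> xs ! (length xs - 2) = z")
      case True
      then have "z \<in> set xs" by (metis diff_less nth_mem zero_less_numeral order_less_le_trans)
      then show ?thesis using is_arc_in_desc[OF xs(1)] xs(2) by auto
    next
      case False
      then have "is_arc G (xs @ [z])" using is_arc_snoc[OF xs(1)] xs(3) step by auto
      then show ?thesis using is_arc_in_desc[of G "xs @ [z]" z] xs by (auto simp: is_arc_def)
    qed
  qed
qed

lemma desc_subset_verts: "desc G x \<subseteq> verts G"
proof
  fix y assume "y \<in> desc G x"
  then have "(x, y) \<in> (inner_edges G)\<^sup>*" "x \<in> verts G" by (simp_all add: desc_iff)
  then show "y \<in> verts G" by (cases rule: rtranclE) auto
qed

lemma desc_self: "x \<in> verts G \<Longrightarrow> x \<in> desc G x"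
  by (simp add: desc_iff)

lemma desc_trans: "y \<in> desc G x \<Longrightarrow> z \<in> desc G y \<Longrightarrow> z \<in> desc G x"
  by (auto simp: desc_iff)

lemma desc_edge:
  assumes "y \<in> desc G x" "(y, z) \<in> edges G" "z \<in> verts G"
  shows "z \<in> desc G x"
proof -
  have "y \<in> verts G" using assms(1) desc_subset_verts by fast
  with assms show ?thesis by (auto simp: desc_iff intro: rtrancl_into_rtrancl)
qed

lemma desc_closed_desc_set: "Z \<subseteq> verts G \<Longrightarrow> desc_closed G (desc_set G Z)"
  unfolding desc_closed_def desc_set_def using desc_subset_verts[of G] by (auto intro: desc_trans)

lemma desc_closed_desc: "a \<in> verts G \<Longrightarrow> desc_closed G (desc G a)"
  using desc_closed_desc_set[of "{a}" G] by (simp add: desc_set_def)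

lemma desc_n_1: "x \<in> verts G \<Longrightarrow> desc_n G 1 x = {y \<in> verts G. (x, y) \<in> edges G}"
proof (intro equalityI subsetI)
  fix y assume "y \<in> desc_n G 1 x"
  then obtain xs where xs: "is_arc G xs" "hd xs = x" "length xs = 2" "last xs = y"
    unfolding desc_n_def by auto
  then obtain u v where "xs = [u, v]"
    by (metis One_nat_def Suc_1 length_0_conv length_Suc_conv)
  with xs show "y \<in> {y \<in> verts G. (x, y) \<in> edges G}"
    unfolding is_arc_def by (auto dest: spec[of _ 0])
next
  fix y assume "x \<in> verts G" "y \<in> {y \<in> verts G. (x, y) \<in> edges G}"
  then have "is_arc G [x, y]"
    unfolding is_arc_def by (auto simp: less_Suc_eq nth_Cons split: nat.splits)
  then show "y \<in> desc_n G 1 x" unfolding desc_n_def by force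
qed

lemma le_embedding_imp_embedding: "le_embedding A B f \<Longrightarrow> embedding A B f"
  by (simp add: le_embedding_def)

lemma embedding_image_desc_subset:
  assumes "embedding A B f" "a \<in> verts A"
  shows "f ` desc A a \<subseteq> desc B (f a)"
proof
  fix z assume "z \<in> f ` desc A a"
  then obtain w where w: "(a, w) \<in> (inner_edges A)\<^sup>*" "z = f w" by (auto simp: desc_iff)
  from w(1) have "(f a, f w) \<in> (inner_edges B)\<^sup>*"
  proof (induction rule: rtrancl_induct)
    case (step u v)
    then have "(f u, f v) \<in> inner_edges B" using assms(1) by (auto simp: embedding_def)
    with step.IH show ?case by (rule rtrancl_into_rtrancl)
  qed simp
  with assms w(2) show "z \<in> desc B (f a)" by (auto simp: desc_iff embedding_def)
qed

text \<open>Descendant-closedness of the image rules out new descendants.\<close>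
lemma le_embedding_desc:
  assumes f: "le_embedding A B f" and a: "a \<in> verts A"
  shows "desc B (f a) = f ` desc A a"
proof
  show "f ` desc A a \<subseteq> desc B (f a)"
    using embedding_image_desc_subset[OF le_embedding_imp_embedding[OF f] a] .
  have emb: "embedding A B f" and closed: "desc_closed B (f ` verts A)"
    using f by (auto simp: le_embedding_def)
  show "desc B (f a) \<subseteq> f ` desc A a"
  proof
    fix z assume "z \<in> desc B (f a)"
    then have "(f a, z) \<in> (inner_edges B)\<^sup>*" by (simp add: desc_iff)
    then show "z \<in> f ` desc A a"
    proof (induction rule: rtrancl_induct)
      case base
      then show ?case using desc_self[OF a] by simp
    next
      case (step z z')
      then obtain w where w: "w \<in> desc A a" "z = f w" by auto
      have wA: "w \<in> verts A" using w(1) desc_subset_verts by fast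
      have "z' \<in> desc B (f w)"
        using step(2) w(2) emb wA by (auto simp: embedding_def intro: desc_edge desc_self)
      then obtain w' where w': "w' \<in> verts A" "z' = f w'"
        using closed wA \<open>z' \<in> desc B (f w)\<close> unfolding desc_closed_def by blast
      have "(w, w') \<in> edges A" using emb wA w' step(2) w(2) by (auto simp: embedding_def)
      then have "w' \<in> desc A a" using desc_edge[OF w(1) _ w'(1)] by simp
      then show ?case using w' by auto
    qed
  qed
qed

lemma le_embedding_id: "le_embedding A A id"
  unfolding le_embedding_def embedding_def desc_closed_def using desc_subset_verts[of A] by auto

lemma le_embedding_comp:
  assumes f: "le_embedding A B f" and g: "le_embedding B C g"
  shows "le_embedding A C (g \<circ> f)"
proof -
  have "embedding A C (g \<circ> f)"
    unfolding embedding_def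
  proof (intro conjI ballI)
    show "inj_on (g \<circ> f) (verts A)" "(g \<circ> f) ` verts A \<subseteq> verts C"
      using f g unfolding le_embedding_def embedding_def by (auto intro: comp_inj_on inj_on_subset)
    fix x y assume "x \<in> verts A" "y \<in> verts A"
    moreover from this have "f x \<in> verts B" "f y \<in> verts B"
      using f by (auto simp: le_embedding_def embedding_def)
    ultimately show "(x, y) \<in> edges A \<longleftrightarrow> ((g \<circ> f) x, (g \<circ> f) y) \<in> edges C"
      using f g by (simp add: le_embedding_def embedding_def)
  qed
  moreover have "desc C (g (f a)) \<subseteq> g ` f ` verts A" if "a \<in> verts A" for a
  proof -
    have "f a \<in> verts B" using f that by (auto simp: le_embedding_def embedding_def)
    then have "desc C (g (f a)) = g ` desc B (f a)" by (rule le_embedding_desc[OF g])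
    also have "\<dots> \<subseteq> g ` f ` verts A"
      using f that by (intro image_mono) (auto simp: le_embedding_def desc_closed_def)
    finally show ?thesis .
  qed
  ultimately show ?thesis
    unfolding le_embedding_def desc_closed_def embedding_def by (auto simp: image_comp)
qed

lemma le_embedding_induced: "desc_closed G X \<Longrightarrow> le_embedding (induced G X) G id"
  unfolding le_embedding_def embedding_def induced_def verts_def edges_def desc_closed_def
  by auto

lemma desc_induced: "desc_closed G X \<Longrightarrow> x \<in> X \<Longrightarrow> desc (induced G X) x = desc G x"
  using le_embedding_desc[OF le_embedding_induced, of G X x] by (simp add: induced_def verts_def)

lemma iso_map_le_embedding: "iso_map G H h \<Longrightarrow> le_embedding G H h"
  unfolding iso_map_def le_embedding_def embedding_def desc_closed_def bij_betw_def
  using desc_subset_verts[of H] by auto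

lemma iso_map_desc: "iso_map G H h \<Longrightarrow> x \<in> verts G \<Longrightarrow> desc H (h x) = h ` desc G x"
  by (rule le_embedding_desc[OF iso_map_le_embedding])

lemma iso_map_inv:
  assumes "iso_map G H h"
  shows "iso_map H G (inv_into (verts G) h)"
proof -
  have bij: "bij_betw h (verts G) (verts H)" using assms by (simp add: iso_map_def)
  have "(x, y) \<in> edges H \<longleftrightarrow> (inv_into (verts G) h x, inv_into (verts G) h y) \<in> edges G"
    if "x \<in> verts H" "y \<in> verts H" for x y
    using assms that bij_betw_apply[OF bij_betw_inv_into[OF bij]] f_inv_into_f[of _ h "verts G"]
    unfolding iso_map_def bij_betw_def by metis
  with bij_betw_inv_into[OF bij] show ?thesis by (simp add: iso_map_def)
qed

lemma iso_map_comp: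
  assumes "iso_map G H h" "iso_map H K k"
  shows "iso_map G K (k \<circ> h)"
proof -
  have bij: "bij_betw h (verts G) (verts H)" using assms(1) by (simp add: iso_map_def)
  have "(x, y) \<in> edges G \<longleftrightarrow> (k (h x), k (h y)) \<in> edges K"
    if "x \<in> verts G" "y \<in> verts G" for x y
    using assms that bij_betw_apply[OF bij] by (simp add: iso_map_def)
  with assms bij show ?thesis by (auto simp: iso_map_def intro: bij_betw_trans)
qed

lemma embedding_common_preds:
  assumes "embedding B C g" "X \<subseteq> verts B"
  shows "g ` common_preds B X \<subseteq> common_preds C (g ` X)"
  using assms unfolding embedding_def common_preds_def by blast

lemma independent_subset: "independent G U \<Longrightarrow> S \<subseteq> U \<Longrightarrow> independent G S"
  unfolding independent_def by blast

lemma le_embedding_independent: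
  assumes f: "le_embedding A B f" and U: "independent A U"
  shows "independent B (f ` U)"
proof -
  have inj: "inj_on f (verts A)" and UA: "U \<subseteq> verts A"
    using f U by (auto simp: le_embedding_def embedding_def independent_def)
  have "f ` U \<subseteq> verts B" using f UA by (auto simp: le_embedding_def embedding_def)
  moreover have "desc B (f u) \<inter> desc B (f v) = {}" if "u \<in> U" "v \<in> U" "f u \<noteq> f v" for u v
  proof -
    have "desc B (f u) \<inter> desc B (f v) = f ` (desc A u \<inter> desc A v)"
      using that UA inj desc_subset_verts[of A]
      by (auto simp add: le_embedding_desc[OF f] inj_on_image_Int subset_iff)
    moreover have "u \<noteq> v" using that(3) by blast
    ultimately show ?thesis using that U by (simp add: independent_def)
  qed
  ultimately show ?thesis by (auto simp: independent_def)
qed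

lemma desc_n_1_induced:
  assumes closed: "desc_closed G X" and x: "x \<in> X"
  shows "desc_n (induced G X) 1 x = desc_n G 1 x"
proof -
  have xG: "x \<in> verts G" and xH: "x \<in> verts (induced G X)"
    using assms by (auto simp: desc_closed_def induced_def verts_def)
  have "y \<in> X" if "y \<in> verts G" "(x, y) \<in> edges G" for y
    using assms desc_edge[OF desc_self[OF xG] that(2,1)] by (auto simp: desc_closed_def)
  then show ?thesis
    unfolding desc_n_1[OF xG] desc_n_1[OF xH] using closed x
    by (auto simp: induced_def verts_def edges_def desc_closed_def)
qed

lemma independent_induced:
  assumes closed: "desc_closed G Y" and ind: "independent (induced G Y) X"
  shows "independent G X"
proof -
  have XY: "X \<subseteq> Y" using ind by (simp add: independent_def induced_def verts_def)
  then have "desc (induced G Y) u = desc G u" if "u \<in> X" for u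
    using desc_induced[OF closed] that by blast
  with ind XY closed show ?thesis by (auto simp: independent_def desc_closed_def)
qed

lemma iso_map_children:
  assumes h: "iso_map G H h" and x: "x \<in> verts G"
  shows "h ` desc_n G 1 x = desc_n H 1 (h x)"
proof -
  have bij: "bij_betw h (verts G) (verts H)" using h by (simp add: iso_map_def)
  then have hx: "h x \<in> verts H" using x by (rule bij_betw_apply)
  have "h ` {y \<in> verts G. (x, y) \<in> edges G} = {z \<in> verts H. (h x, z) \<in> edges H}"
  proof (intro equalityI subsetI)
    fix z assume "z \<in> {z \<in> verts H. (h x, z) \<in> edges H}"
    moreover then obtain y where "y \<in> verts G" "z = h y"
      using bij by (auto simp: bij_betw_def)
    ultimately show "z \<in> h ` {y \<in> verts G. (x, y) \<in> edges G}"
      using h x by (auto simp: iso_map_def)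
  qed (use h x bij_betw_apply[OF bij] in \<open>auto simp: iso_map_def\<close>)
  then show ?thesis unfolding desc_n_1[OF x] desc_n_1[OF hx] .
qed

lemma iso_map_reflects_independent:
  assumes h: "iso_map G H h" and X: "X \<subseteq> verts G" and ind: "independent H (h ` X)"
  shows "independent G X"
proof -
  have inj: "inj_on h (verts G)" using h by (simp add: iso_map_def bij_betw_def)
  have "desc G u \<inter> desc G v = {}" if "u \<in> X" "v \<in> X" "u \<noteq> v" for u v
  proof -
    have "h u \<noteq> h v" using inj X that by (auto simp: inj_on_def)
    then have "h ` desc G u \<inter> h ` desc G v = {}"
      using ind that X by (simp add: independent_def iso_map_desc[OF h] subset_iff)
    then show ?thesis by blast
  qed
  with X show ?thesis by (simp add: independent_def)
qed

lemma T_q_verts: "w \<in> verts (T_q q) \<longleftrightarrow> set w \<subseteq> {..<q}"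
  by (simp add: T_q_def verts_def)

lemma T_q_edges: "(u, v) \<in> edges (T_q q) \<longleftrightarrow> set u \<subseteq> {..<q} \<and> (\<exists>i<q. v = u @ [i])"
  by (auto simp: T_q_def edges_def)

lemma T_q_desc_extends: "v \<in> desc (T_q q) u \<Longrightarrow> \<exists>w. v = u @ w"
proof -
  assume "v \<in> desc (T_q q) u"
  then have "(u, v) \<in> (inner_edges (T_q q))\<^sup>*" by (simp add: desc_iff)
  then show ?thesis by (induction rule: rtrancl_induct) (auto simp: T_q_edges)
qed

lemma T_q_children_root: "desc_n (T_q q) 1 [] = (\<lambda>i. [i]) ` {..<q}"
proof -
  have root: "[] \<in> verts (T_q q)" by (simp add: T_q_verts)
  show ?thesis unfolding desc_n_1[OF root] by (auto simp: T_q_verts T_q_edges)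
qed

lemma T_q_children_root_independent: "independent (T_q q) ((\<lambda>i. [i]) ` {..<q})"
  unfolding independent_def by (auto simp: T_q_verts dest!: T_q_desc_extends)

text \<open>Only the root of the tree has every vertex as a descendant.\<close>
lemma iso_map_root:
  assumes h: "iso_map (induced G (desc G a)) (T_q q) h" and a: "a \<in> verts G"
  shows "h a = []"
proof -
  have aa: "a \<in> desc G a" using a by (rule desc_self)
  have "desc (T_q q) (h a) = h ` desc G a"
    using iso_map_desc[OF h] desc_induced[OF desc_closed_desc[OF a] aa] aa
    by (simp add: induced_def verts_def)
  also have "\<dots> = verts (T_q q)"
    using h by (simp add: iso_map_def bij_betw_def induced_def verts_def)
  finally have "[] \<in> desc (T_q q) (h a)" by (simp add: T_q_verts)
  then show ?thesis by (auto dest: T_q_desc_extends)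
qed

lemma children_of_tree_vertex:
  assumes h: "iso_map (induced G (desc G a)) (T_q q) h" and a: "a \<in> verts G"
  shows "finite (desc_n G 1 a)" "card (desc_n G 1 a) = q" "independent G (desc_n G 1 a)"
proof -
  let ?H = "induced G (desc G a)"
  have closed: "desc_closed G (desc G a)" using a by (rule desc_closed_desc)
  have aH: "a \<in> verts ?H" using desc_self[OF a] by (simp add: induced_def verts_def)
  have children: "desc_n ?H 1 a = desc_n G 1 a"
    using desc_n_1_induced[OF closed desc_self[OF a]] .
  have "h ` desc_n G 1 a = desc_n (T_q q) 1 (h a)"
    using iso_map_children[OF h aH] unfolding children .
  then have image: "h ` desc_n G 1 a = (\<lambda>i. [i]) ` {..<q}"
    unfolding iso_map_root[OF h a] T_q_children_root .
  have sub: "desc_n G 1 a \<subseteq> verts ?H" using children desc_n_1[OF aH] by auto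
  moreover have "inj_on h (verts ?H)" using h by (simp add: iso_map_def bij_betw_def)
  ultimately have inj: "inj_on h (desc_n G 1 a)" by (rule inj_on_subset[rotated])
  show "finite (desc_n G 1 a)" using finite_image_iff[OF inj] image by simp
  show "card (desc_n G 1 a) = q"
    using card_image[OF inj] image by (simp add: card_image inj_on_def)
  have "independent ?H (desc_n G 1 a)"
    using iso_map_reflects_independent[OF h sub] image T_q_children_root_independent by simp
  then show "independent G (desc_n G 1 a)" by (rule independent_induced[OF closed])
qed

lemma independent_desc_unique:
  "independent G K \<Longrightarrow> k \<in> K \<Longrightarrow> k' \<in> K \<Longrightarrow> v \<in> desc G k \<Longrightarrow> v \<in> desc G k' \<Longrightarrow> k = k'"
  unfolding independent_def by blast

lemma iso_map_induced_desc:
  assumes "iso_map (induced G (desc G k)) (induced B (desc B b)) \<phi>"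
  shows "bij_betw \<phi> (desc G k) (desc B b)"
    and "\<And>x y. x \<in> desc G k \<Longrightarrow> y \<in> desc G k \<Longrightarrow>
           (x, y) \<in> edges G \<longleftrightarrow> (\<phi> x, \<phi> y) \<in> edges B"
  using assms unfolding iso_map_def by (auto simp: induced_def verts_def edges_def dest: bij_betw_apply)

text \<open>Isomorphisms between the descendant sets of the members of an independent set
  glue together, because no edge leaves a descendant set.\<close>
lemma glued_isos_le_embedding:
  assumes wfG: "wf_digraph G" and wfB: "wf_digraph B"
    and K: "independent G K" and S: "independent B (\<beta> ` K)" and inj: "inj_on \<beta> K"
    and iso: "\<And>k. k \<in> K \<Longrightarrow> iso_map (induced G (desc G k)) (induced B (desc B (\<beta> k))) (\<phi> k)"
    and e: "\<And>k v. k \<in> K \<Longrightarrow> v \<in> desc G k \<Longrightarrow> e v = \<phi> k v"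
  shows "le_embedding (induced G (desc_set G K)) B e"
proof -
  let ?A = "induced G (desc_set G K)"
  have verts_A: "verts ?A = (\<Union>k\<in>K. desc G k)"
    by (simp add: induced_def verts_def desc_set_def)
  have e_desc: "e ` desc G k = desc B (\<beta> k)" if "k \<in> K" for k
    using iso_map_induced_desc(1)[OF iso[OF that]] e[OF that] by (simp add: bij_betw_def)
  have same: "k = k'"
    if "k \<in> K" "v \<in> desc G k" "k' \<in> K" "w \<in> desc G k'" "e w \<in> desc B (\<beta> k)" for k k' v w
  proof -
    have "e w \<in> desc B (\<beta> k')" using e_desc[OF that(3)] that(4) by blast
    then have "\<beta> k = \<beta> k'"
      using independent_desc_unique[OF S imageI[OF that(1)] imageI[OF that(3)] that(5)] by simp
    with inj that(1,3) show ?thesis by (simp add: inj_on_def)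
  qed
  have "inj_on e (verts ?A)"
  proof (rule inj_onI)
    fix v w assume "v \<in> verts ?A" "w \<in> verts ?A" and ew: "e v = e w"
    then obtain k k' where v: "k \<in> K" "v \<in> desc G k" and w: "k' \<in> K" "w \<in> desc G k'"
      using verts_A by auto
    have "e v \<in> desc B (\<beta> k)" using e_desc[OF v(1)] v(2) by blast
    then have "k = k'" using same[OF v w] ew by simp
    then have "\<phi> k v = \<phi> k w" using ew e v w by simp
    with iso_map_induced_desc(1)[OF iso[OF v(1)]] v w \<open>k = k'\<close> show "v = w"
      unfolding bij_betw_def inj_on_def by blast
  qed
  moreover have "(v, w) \<in> edges ?A \<longleftrightarrow> (e v, e w) \<in> edges B"
    if vw_A: "v \<in> verts ?A" "w \<in> verts ?A" for v w
  proof -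
    obtain k k' where v: "k \<in> K" "v \<in> desc G k" and w: "k' \<in> K" "w \<in> desc G k'"
      using vw_A verts_A by auto
    note edges_k = iso_map_induced_desc(2)[OF iso[OF v(1)]]
    show ?thesis
    proof
      assume "(v, w) \<in> edges ?A"
      then have vw: "(v, w) \<in> edges G" by (simp add: induced_def edges_def)
      with wfG have "w \<in> desc G k" using desc_edge[OF v(2)] by (auto simp: wf_digraph_def)
      then show "(e v, e w) \<in> edges B" using edges_k v vw e by simp
    next
      assume vw: "(e v, e w) \<in> edges B"
      moreover have "e w \<in> verts B" using vw wfB by (auto simp: wf_digraph_def)
      moreover have "e v \<in> desc B (\<beta> k)" using e_desc[OF v(1)] v(2) by blast
      ultimately have "e w \<in> desc B (\<beta> k)" by (blast intro: desc_edge)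
      then have "k = k'" using same[OF v w] by simp
      then have "(v, w) \<in> edges G" using edges_k v w vw e by simp
      then show "(v, w) \<in> edges ?A" using vw_A by (simp add: induced_def edges_def verts_def)
    qed
  qed
  moreover have image: "e ` verts ?A = desc_set B (\<beta> ` K)"
    unfolding verts_A image_UN using e_desc by (simp add: desc_set_def)
  moreover have "desc_closed B (desc_set B (\<beta> ` K))"
    using S by (simp add: desc_closed_desc_set independent_def)
  ultimately show ?thesis
    unfolding le_embedding_def embedding_def image desc_closed_def by blast
qed

lemma independent_sets_le_embedding:
  assumes wfG: "wf_digraph G" and wfB: "wf_digraph B"
    and treesG: "\<forall>a\<in>verts G. isomorphic (induced G (desc G a)) (T_q q)"
    and treesB: "\<forall>b\<in>verts B. isomorphic (induced B (desc B b)) (T_q q)"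
    and K: "independent G K" "finite K" and S: "independent B S" "finite S"
    and card: "card K = card S"
  shows "\<exists>e. le_embedding (induced G (desc_set G K)) B e \<and> e ` K = S"
proof -
  obtain \<beta> where \<beta>: "bij_betw \<beta> K S" using finite_same_card_bij[OF K(2) S(2) card] by blast
  have KG: "K \<subseteq> verts G" and SB: "S \<subseteq> verts B"
    using K S by (simp_all add: independent_def)
  obtain hG where hG: "\<And>a. a \<in> verts G \<Longrightarrow> iso_map (induced G (desc G a)) (T_q q) (hG a)"
    using bchoice[OF treesG[unfolded isomorphic_def]] by blast
  obtain hB where hB: "\<And>b. b \<in> verts B \<Longrightarrow> iso_map (induced B (desc B b)) (T_q q) (hB b)"
    using bchoice[OF treesB[unfolded isomorphic_def]] by blast
  define \<phi> where
    "\<phi> k = inv_into (verts (induced B (desc B (\<beta> k)))) (hB (\<beta> k)) \<circ> hG k" for k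
  have \<beta>B: "\<beta> k \<in> verts B" if "k \<in> K" for k using SB bij_betw_apply[OF \<beta> that] by blast
  have iso: "iso_map (induced G (desc G k)) (induced B (desc B (\<beta> k))) (\<phi> k)" if "k \<in> K" for k
    unfolding \<phi>_def using that KG \<beta>B by (blast intro: iso_map_comp iso_map_inv hG hB)
  have root: "\<phi> k k = \<beta> k" if k: "k \<in> K" for k
  proof -
    let ?Hb = "induced B (desc B (\<beta> k))"
    have kG: "k \<in> verts G" using KG k by blast
    have "inj_on (hB (\<beta> k)) (verts ?Hb)"
      using hB[OF \<beta>B[OF k]] by (simp add: iso_map_def bij_betw_def)
    moreover have "\<beta> k \<in> verts ?Hb" using desc_self[OF \<beta>B[OF k]] by (simp add: induced_def verts_def)
    ultimately have "inv_into (verts ?Hb) (hB (\<beta> k)) (hB (\<beta> k) (\<beta> k)) = \<beta> k"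
      by (rule inv_into_f_f)
    moreover have "hG k k = hB (\<beta> k) (\<beta> k)"
      using iso_map_root[OF hG[OF kG] kG] iso_map_root[OF hB[OF \<beta>B[OF k]] \<beta>B[OF k]] by simp
    ultimately show ?thesis by (simp add: \<phi>_def)
  qed
  define e where "e v = \<phi> (THE k. k \<in> K \<and> v \<in> desc G k) v" for v
  have e: "e v = \<phi> k v" if "k \<in> K" "v \<in> desc G k" for k v
  proof -
    have "(THE k. k \<in> K \<and> v \<in> desc G k) = k"
      using that independent_desc_unique[OF K(1)] by blast
    then show ?thesis by (simp add: e_def)
  qed
  have "le_embedding (induced G (desc_set G K)) B e"
    using glued_isos_le_embedding[OF wfG wfB K(1) _ _ iso e] S(1) \<beta> by (simp add: bij_betw_def)
  moreover have "e ` K = S"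
  proof -
    have "e k = \<beta> k" if "k \<in> K" for k
      using e[OF that desc_self[OF subsetD[OF KG that]]] root[OF that] by simp
    then show ?thesis using \<beta> by (simp add: bij_betw_def)
  qed
  ultimately show ?thesis by blast
qed

lemma T_n_common_children:
  assumes "is_T_n q N G"
  obtains x0 X where "x0 \<in> verts G" "card X = N" "X \<subseteq> common_preds G (desc_n G 1 x0)"
proof -
  obtain xs where xs: "length xs = N" "distinct xs" "set xs \<subseteq> verts G"
    and same_children: "\<forall>i<N. \<forall>j<N. desc_n G 1 (xs ! i) = desc_n G 1 (xs ! j)"
    and "N \<ge> 1"
    using assms by (auto simp: is_T_n_def)
  then have "xs ! 0 \<in> set xs" by simp
  with xs(3) have x0: "xs ! 0 \<in> verts G" by blast
  have "set xs \<subseteq> common_preds G (desc_n G 1 (xs ! 0))"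
  proof
    fix x assume "x \<in> set xs"
    then obtain i where i: "i < N" "x = xs ! i" using xs(1) by (auto simp: in_set_conv_nth)
    then have "desc_n G 1 x = desc_n G 1 (xs ! 0)"
      using same_children[rule_format, of i 0] \<open>N \<ge> 1\<close> by simp
    moreover have x: "x \<in> verts G" using \<open>x \<in> set xs\<close> xs(3) by blast
    ultimately show "x \<in> common_preds G (desc_n G 1 (xs ! 0))"
      using desc_n_1[OF x] by (auto simp: common_preds_def)
  qed
  moreover have "card (set xs) = N" using xs(1,2) by (simp add: distinct_card)
  ultimately show ?thesis using that x0 by blast
qed

lemma le_amalgamation_class_desc_set:
  assumes "le_amalgamation_class D" "G \<in> D" "finite Z" "Z \<subseteq> verts G"
  shows "induced G (desc_set G Z) \<in> D"
proof -
  have "\<forall>G\<in>D. \<forall>Z. finite Z \<and> Z \<subseteq> verts G \<longrightarrow> induced G (desc_set G Z) \<in> D"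
    using assms(1) unfolding le_amalgamation_class_def by (elim conjE) assumption
  with assms(2-4) show ?thesis by blast
qed

lemma le_amalgamation_class_amalgamate:
  assumes "le_amalgamation_class D" "A \<in> D" "B1 \<in> D" "B2 \<in> D"
    and "le_embedding A B1 f1" "le_embedding A B2 f2"
  obtains C g1 g2 where "C \<in> D" "le_embedding B1 C g1" "le_embedding B2 C g2"
    "\<forall>x\<in>verts A. g1 (f1 x) = g2 (f2 x)"
proof -
  have "\<forall>A\<in>D. \<forall>B1\<in>D. \<forall>B2\<in>D. \<forall>f1 f2.
        le_embedding A B1 f1 \<and> le_embedding A B2 f2 \<longrightarrow>
        (\<exists>C\<in>D. \<exists>g1 g2. le_embedding B1 C g1 \<and> le_embedding B2 C g2 \<and>
            (\<forall>x\<in>verts A. g1 (f1 x) = g2 (f2 x)))"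
    using assms(1) unfolding le_amalgamation_class_def by (elim conjE) assumption
  with assms(2-6) that show ?thesis by blast
qed

text \<open>Amalgamate \<open>B\<close> with \<open>\<T>\<^sub>N\<close> over the descendant sets of \<open>S\<close> and of the
  children shared by the generators of \<open>\<T>\<^sub>N\<close>.\<close>
lemma amalgamation_adds_common_preds:
  assumes D: "le_amalgamation_class D" and C: "\<forall>G\<in>D. in_C q G" and B: "B \<in> D"
    and S: "independent B S" "finite S" "card S = q"
    and G: "G \<in> D" "is_T_n q N G"
  shows "\<exists>C\<in>D. \<exists>g. le_embedding B C g \<and> (\<exists>P. P \<subseteq> common_preds C (g ` S) \<and> card P = N)"
proof -
  obtain x0 X where x0: "x0 \<in> verts G" and X: "card X = N" "X \<subseteq> common_preds G (desc_n G 1 x0)"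
    using T_n_common_children[OF G(2)] .
  define K where "K = desc_n G 1 x0"
  have GC: "in_C q G" and BC: "in_C q B" using C G(1) B by auto
  then obtain h where "iso_map (induced G (desc G x0)) (T_q q) h"
    using x0 by (auto simp: in_C_def isomorphic_def)
  from children_of_tree_vertex[OF this x0]
  have K: "finite K" "card K = q" "independent G K" unfolding K_def by auto
  then have KG: "K \<subseteq> verts G" by (simp add: independent_def)
  have "wf_digraph G" "wf_digraph B" "\<forall>a\<in>verts G. isomorphic (induced G (desc G a)) (T_q q)"
    and "\<forall>b\<in>verts B. isomorphic (induced B (desc B b)) (T_q q)"
    using GC BC by (simp_all add: in_C_def)
  from independent_sets_le_embedding[OF this K(3,1) S(1,2)] K(2) S(3)
  obtain e where e: "le_embedding (induced G (desc_set G K)) B e" "e ` K = S" by auto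
  let ?A = "induced G (desc_set G K)"
  have A: "?A \<in> D" using le_amalgamation_class_desc_set[OF D G(1) K(1) KG] .
  obtain C g1 g2 where CD: "C \<in> D" and g1: "le_embedding B C g1" and g2: "le_embedding G C g2"
    and commute: "\<forall>x\<in>verts ?A. g1 (e x) = g2 (id x)"
    using le_amalgamation_class_amalgamate[OF D A B G(1) e(1)
        le_embedding_induced[OF desc_closed_desc_set[OF KG]]] .
  have "K \<subseteq> desc_set G K" using KG desc_self[of _ G] unfolding desc_set_def by blast
  then have "K \<subseteq> verts ?A" by (simp add: induced_def verts_def)
  then have "g2 k = g1 (e k)" if "k \<in> K" for k using commute that by auto
  then have "g2 ` K = g1 ` S" unfolding e(2)[symmetric] image_image by (rule image_cong[OF refl])
  moreover have "g2 ` X \<subseteq> g2 ` common_preds G K" using X(2) unfolding K_def by (rule image_mono)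
  ultimately have "g2 ` X \<subseteq> common_preds C (g1 ` S)"
    using embedding_common_preds[OF le_embedding_imp_embedding[OF g2] KG] by simp
  moreover have "X \<subseteq> verts G" using X(2) by (auto simp: common_preds_def)
  then have "card (g2 ` X) = N"
    using g2 X(1) by (auto simp: le_embedding_def embedding_def card_image inj_on_subset)
  ultimately show ?thesis using CD g1 by blast
qed

lemma amalgamation_adds_common_preds_to_all:
  assumes D: "le_amalgamation_class D" and C: "\<forall>G\<in>D. in_C q G" and A: "A \<in> D"
    and U: "independent A U" and G: "G \<in> D" "is_T_n q N G"
    and F: "finite F" "\<forall>S\<in>F. S \<subseteq> U \<and> finite S \<and> card S = q"
  shows "\<exists>B\<in>D. \<exists>f. le_embedding A B f \<and> (\<forall>S\<in>F. \<exists>P. P \<subseteq> common_preds B (f ` S) \<and> card P = N)"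
  using F
proof (induction F rule: finite_induct)
  case empty
  show ?case using A le_embedding_id by blast
next
  case (insert S F)
  then obtain B f where B: "B \<in> D" and f: "le_embedding A B f"
    and old: "\<forall>S\<in>F. \<exists>P. P \<subseteq> common_preds B (f ` S) \<and> card P = N"
    by auto
  have S: "S \<subseteq> U" "finite S" "card S = q" using insert.prems by auto
  have UA: "U \<subseteq> verts A" using U by (simp add: independent_def)
  have inj: "inj_on f (verts A)" and fA: "f ` verts A \<subseteq> verts B"
    using f by (auto simp: le_embedding_def embedding_def)
  have "independent B (f ` S)"
    using le_embedding_independent[OF f independent_subset[OF U S(1)]] .
  moreover have "finite (f ` S)" using S(2) by simp
  moreover have "inj_on f S" using inj_on_subset[OF inj] S(1) UA by blast
  then have "card (f ` S) = q" using S(3) by (simp add: card_image)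
  ultimately obtain C g P where CD: "C \<in> D" and g: "le_embedding B C g"
    and P: "P \<subseteq> common_preds C (g ` f ` S)" "card P = N"
    using amalgamation_adds_common_preds[OF D C B _ _ _ G] by blast
  have old_in_C: "\<exists>P. P \<subseteq> common_preds C (g ` f ` S') \<and> card P = N" if S': "S' \<in> F" for S'
  proof -
    obtain P' where P': "P' \<subseteq> common_preds B (f ` S')" "card P' = N"
      using old S' by blast
    have "S' \<subseteq> U" using insert.prems S' by simp
    then have "f ` S' \<subseteq> verts B" using UA fA by blast
    then have "g ` P' \<subseteq> common_preds C (g ` f ` S')"
      using embedding_common_preds[OF le_embedding_imp_embedding[OF g]] P'(1) by blast
    moreover have "P' \<subseteq> verts B" using P'(1) by (auto simp: common_preds_def)
    then have "card (g ` P') = N"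
      using g P'(2) by (auto simp: le_embedding_def embedding_def card_image inj_on_subset)
    ultimately show ?thesis by blast
  qed
  have "\<forall>S'\<in>insert S F. \<exists>P. P \<subseteq> common_preds C ((g \<circ> f) ` S') \<and> card P = N"
    using old_in_C P unfolding image_comp[symmetric] by blast
  with CD le_embedding_comp[OF f g] show ?case by blast
qed

theorem lemma3p3:
  fixes q N :: nat and D :: "nat digraph set" and A :: "nat digraph" and U :: "nat set"
  assumes "q \<ge> 2"
    and "le_amalgamation_class D"
    and "\<forall>G\<in>D. in_C q G"
    and "A \<in> D"
    and "finite U" and "independent A U"
    and "\<forall>S. S \<subseteq> U \<and> card S = q \<longrightarrow>
           finite (common_preds A S) \<and> card (common_preds A S) \<le> N"
    and "\<exists>G\<in>D. is_T_n q N G"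
  shows "\<exists>B\<in>D. \<exists>f. le_embedding A B f \<and>
           (\<forall>S. S \<subseteq> U \<and> card S = q \<longrightarrow>
              (\<exists>P. P \<subseteq> common_preds B (f ` S) \<and> card P = N))"
proof -
  let ?F = "{S. S \<subseteq> U \<and> card S = q}"
  have F: "finite ?F" using \<open>finite U\<close> by (simp add: finite_subset[of _ "Pow U"] subset_iff)
  have F_members: "\<forall>S\<in>?F. S \<subseteq> U \<and> finite S \<and> card S = q"
    using \<open>finite U\<close> finite_subset by blast
  obtain G where G: "G \<in> D" "is_T_n q N G" using assms(8) by blast
  obtain B f where "B \<in> D" "le_embedding A B f"
    and "\<forall>S\<in>?F. \<exists>P. P \<subseteq> common_preds B (f ` S) \<and> card P = N"
    using amalgamation_adds_common_preds_to_all[OF assms(2-4,6) G F F_members] by blast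
  then show ?thesis by auto
qed

end
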